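(* Let $\mathcal{H},\mathcal{K}$ be Hilbert spaces, let $(\omega_k)_{k\ge0}$ be a sequence of strictly positive weights, set $\beta(0)=1$ and $\beta(n)=\omega_0\cdots\omega_{n-1}$ for $n\ge1$, and suppose $$\sup_{n,k\ge0}\frac{\beta(n+k)}{\beta(n)}<\infty.$$ Let $S_\omega\in\mathcal{B}(\ell^2(\mathcal{H}))$ be the unilateral weighted shift $S_\omega(x_0,x_1,\ldots)=(0,\omega_0x_0,\omega_1x_1,\ldots)$. Let $T\in\mathcal{B}(\mathcal{K})$ be similar to a contraction and let $X\in\mathcal{B}(\ell^2(\mathcal{H}),\mathcal{K})$. Put $$R(X)=\begin{bmatrix}T & X\\ 0 & S_\omega\end{bmatrix},\qquad R(0)=T\oplus S_\omega\qquad\text{in }\mathcal{B}(\mathcal{K}\oplus\ell^2(\mathcal{H})).$$ Suppose there is a constant $s$ such that for every $N\in\mathbb{N}$ and all $x_0,\ldots,x_N\in\mathcal{H}_0$, $$\Big\|\sum_{n=0}^{N}\frac{1}{\beta(n)}\big(R(X)^n-R(0)^n\big)x_n\Big\|\le s\Big(\sum_{n=0}^N\|x_n\|^2\Big)^{1/2},$$ where $\mathcal{H}_0=\{0\}\oplus(\mathcal{H}\oplus\{0\}\oplus\{0\}\oplus\cdots)\subset\mathcal{K}\oplus\ell^2(\mathcal{H})$ (i.e. $R(X)$ is $\beta$-quadratically near $R(0)$ modulo $\mathcal{H}$). Then $R(X)$ is similar to a contraction.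
   Context: Two operators $A,C$ on a Hilbert space $\mathcal{E}$ are $\beta$-quadratically near modulo a subspace $\mathcal{E}_0$ if there is $s$ with $\|\sum_{n=0}^N\beta(n)^{-1}(A^n-C^n)x_n\|\le s(\sum_{n=0}^N\|x_n\|^2)^{1/2}$ for all $N$ and all $x_0,\ldots,x_N\in\mathcal{E}_0$. An operator is similar to a contraction if it is conjugate by an invertible operator to an operator of norm at most 1. *)

theory Defs
  imports "HOL-Analysis.Analysis"
begin

text \<open>A complex Hilbert space is
  the same thing as a real Hilbert space (real inner product = real part of the
  complex one, same norm) together with a complex scalar multiplication extending
  the real one, for which multiplication by the imaginary unit is orthogonal.\<close>

class complex_hilbert = real_inner + complete_space +
  fixes scaleC :: "complex \<Rightarrow> 'a \<Rightarrow> 'a"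
  assumes scaleC_add_right: "scaleC c (x + y) = scaleC c x + scaleC c y"
    and scaleC_add_left: "scaleC (c + d) x = scaleC c x + scaleC d x"
    and scaleC_scaleC: "scaleC c (scaleC d x) = scaleC (c * d) x"
    and scaleC_one: "scaleC 1 x = x"
    and scaleR_scaleC: "scaleR r x = scaleC (complex_of_real r) x"
    and inner_scaleC_ii: "inner (scaleC \<i> x) (scaleC \<i> y) = inner x y"

record 'a cspace =
  sp_carrier :: "'a set"
  sp_add :: "'a \<Rightarrow> 'a \<Rightarrow> 'a"
  sp_scale :: "complex \<Rightarrow> 'a \<Rightarrow> 'a"
  sp_norm :: "'a \<Rightarrow> real"

definition bop :: "'a cspace \<Rightarrow> 'b cspace \<Rightarrow> ('a \<Rightarrow> 'b) \<Rightarrow> bool" where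
  "bop V W A \<longleftrightarrow>
     (\<forall>v\<in>sp_carrier V. A v \<in> sp_carrier W) \<and>
     (\<forall>v\<in>sp_carrier V. \<forall>w\<in>sp_carrier V. A (sp_add V v w) = sp_add W (A v) (A w)) \<and>
     (\<forall>c. \<forall>v\<in>sp_carrier V. A (sp_scale V c v) = sp_scale W c (A v)) \<and>
     (\<exists>C. \<forall>v\<in>sp_carrier V. sp_norm W (A v) \<le> C * sp_norm V v)"

definition similar_to_contraction :: "'a cspace \<Rightarrow> ('a \<Rightarrow> 'a) \<Rightarrow> bool" where
  "similar_to_contraction V A \<longleftrightarrow>
     (\<exists>L Li. bop V V L \<and> bop V V Li \<and>
        (\<forall>v\<in>sp_carrier V. Li (L v) = v \<and> L (Li v) = v) \<and>
        (\<forall>v\<in>sp_carrier V. sp_norm V (L (A (Li v))) \<le> sp_norm V v))"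

definition hspace :: "'a::complex_hilbert cspace" where
  "hspace = \<lparr>sp_carrier = UNIV, sp_add = (+), sp_scale = scaleC, sp_norm = norm\<rparr>"

definition ell2_set :: "(nat \<Rightarrow> 'a::complex_hilbert) set" where
  "ell2_set = {x. summable (\<lambda>n. (norm (x n))\<^sup>2)}"

definition ell2_norm :: "(nat \<Rightarrow> 'a::complex_hilbert) \<Rightarrow> real" where
  "ell2_norm x = sqrt (\<Sum>n. (norm (x n))\<^sup>2)"

definition ell2 :: "(nat \<Rightarrow> 'a::complex_hilbert) cspace" where
  "ell2 = \<lparr>sp_carrier = ell2_set, sp_add = (\<lambda>x y n. x n + y n),
           sp_scale = (\<lambda>c x n. scaleC c (x n)), sp_norm = ell2_norm\<rparr>"

definition dsum_space :: "('k::complex_hilbert \<times> (nat \<Rightarrow> 'h::complex_hilbert)) cspace" where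
  "dsum_space = \<lparr>sp_carrier = UNIV \<times> ell2_set,
      sp_add = (\<lambda>(a, x) (b, y). (a + b, \<lambda>n. x n + y n)),
      sp_scale = (\<lambda>c (a, x). (scaleC c a, \<lambda>n. scaleC c (x n))),
      sp_norm = (\<lambda>(a, x). sqrt ((norm a)\<^sup>2 + (ell2_norm x)\<^sup>2))\<rparr>"

definition wbeta :: "(nat \<Rightarrow> real) \<Rightarrow> nat \<Rightarrow> real" where
  "wbeta \<omega> n = (\<Prod>k<n. \<omega> k)"

definition wshift :: "(nat \<Rightarrow> real) \<Rightarrow> (nat \<Rightarrow> 'a::complex_hilbert) \<Rightarrow> nat \<Rightarrow> 'a" where
  "wshift \<omega> x n = (if n = 0 then 0 else scaleR (\<omega> (n - 1)) (x (n - 1)))"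

definition Rop :: "('k::complex_hilbert \<Rightarrow> 'k) \<Rightarrow> ((nat \<Rightarrow> 'h::complex_hilbert) \<Rightarrow> 'k)
     \<Rightarrow> (nat \<Rightarrow> real) \<Rightarrow> 'k \<times> (nat \<Rightarrow> 'h) \<Rightarrow> 'k \<times> (nat \<Rightarrow> 'h)" where
  "Rop T X \<omega> = (\<lambda>(a, x). (T a + X x, wshift \<omega> x))"

definition emb0 :: "'h::complex_hilbert \<Rightarrow> 'k::complex_hilbert \<times> (nat \<Rightarrow> 'h)" where
  "emb0 h = (0, \<lambda>n. if n = 0 then h else 0)"

definition dsum_sum :: "nat set \<Rightarrow> (nat \<Rightarrow> 'k::complex_hilbert \<times> (nat \<Rightarrow> 'h::complex_hilbert))
     \<Rightarrow> 'k \<times> (nat \<Rightarrow> 'h)" where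
  "dsum_sum I v = ((\<Sum>n\<in>I. fst (v n)), (\<lambda>m. \<Sum>n\<in>I. snd (v n) m))"

definition beta_quad_near_mod_H ::
  "(nat \<Rightarrow> real) \<Rightarrow> ('k::complex_hilbert \<times> (nat \<Rightarrow> 'h::complex_hilbert) \<Rightarrow> 'k \<times> (nat \<Rightarrow> 'h))
     \<Rightarrow> ('k \<times> (nat \<Rightarrow> 'h) \<Rightarrow> 'k \<times> (nat \<Rightarrow> 'h)) \<Rightarrow> bool" where
  "beta_quad_near_mod_H \<beta> A C \<longleftrightarrow>
     (\<exists>s. \<forall>N. \<forall>xs :: nat \<Rightarrow> 'h.
        sp_norm dsum_space
          (dsum_sum {..N} (\<lambda>n. sp_scale dsum_space (complex_of_real (1 / \<beta> n))
              (sp_add dsum_space ((A ^^ n) (emb0 (xs n)))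
                  (sp_scale dsum_space (-1) ((C ^^ n) (emb0 (xs n)))))))
        \<le> s * sqrt (\<Sum>n\<le>N. (norm (xs n))\<^sup>2))"

end

theory Submission
  imports Defs
begin

text \<open>Applying \<open>R(X)\<^sup>n\<close> to a vector \<open>h\<close> of \<open>H\<^sub>0\<close> gives \<open>(D\<^sub>n h, \<beta>(n) h e\<^sub>n)\<close> with
  \<open>D\<^sub>0 = 0\<close> and \<open>D\<^sub>n\<^sub>+\<^sub>1 h = T (D\<^sub>n h) + X (\<beta>(n) h e\<^sub>n)\<close>, whereas \<open>R(0)\<^sup>n\<close> produces the same
  second component and first component \<open>0\<close>. So quadratic nearness says exactly that
  \<open>Y x = \<Sum>\<^sub>n D\<^sub>n x\<^sub>n / \<beta>(n)\<close> converges and defines a bounded operator from \<open>l\<^sup>2(H)\<close> to \<open>K\<close>,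
  and the recursion for \<open>D\<^sub>n\<close> telescopes to the Sylvester equation \<open>X = Y S\<^sub>\<omega> - T Y\<close>.
  Then \<open>[[I, -Y], [0, I]]\<close> conjugates \<open>R(X)\<close> to \<open>T \<oplus> S\<^sub>\<omega>\<close>. Here \<open>T\<close> is similar to a
  contraction by hypothesis, and so is \<open>S\<^sub>\<omega>\<close>: the diagonal operator with entries
  \<open>sup\<^sub>k \<beta>(n + k) / \<beta>(n) \<in> [1, M]\<close> conjugates it to a weighted shift with weights at most 1.\<close>

subclass (in complex_hilbert) banach ..

lemma scaleC_of_real: "scaleC (complex_of_real r) x = r *\<^sub>R (x::'a::complex_hilbert)"
  by (simp add: scaleR_scaleC)

lemma scaleC_scaleR_commute: "scaleC c (r *\<^sub>R x) = r *\<^sub>R scaleC c (x::'a::complex_hilbert)"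
  by (simp add: scaleR_scaleC scaleC_scaleC mult.commute)

lemma scaleC_minus_one: "scaleC (- 1) x = - (x::'a::complex_hilbert)"
  using scaleC_of_real[of "- 1" x] by simp

lemma scaleC_zero_right [simp]: "scaleC c 0 = (0::'a::complex_hilbert)"
  using scaleC_add_right[of c 0 0] by simp

lemma scaleC_minus_right: "scaleC c (- x) = - scaleC c (x::'a::complex_hilbert)"
  by (metis eq_neg_iff_add_eq_0 scaleC_add_right scaleC_zero_right)

lemma norm_scaleC_le: "norm (scaleC c x) \<le> (\<bar>Re c\<bar> + \<bar>Im c\<bar>) * norm (x::'a::complex_hilbert)"
proof -
  have "scaleC c x = Re c *\<^sub>R x + Im c *\<^sub>R scaleC \<i> x"
    by (metis complex_eq mult.commute scaleC_add_left scaleC_of_real scaleC_scaleC)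
  moreover have "norm (scaleC \<i> x) = norm x"
    by (simp add: norm_eq_sqrt_inner inner_scaleC_ii)
  ultimately show ?thesis
    using norm_triangle_ineq[of "Re c *\<^sub>R x" "Im c *\<^sub>R scaleC \<i> x"] by (simp add: algebra_simps)
qed

lemma bounded_linear_scaleC: "bounded_linear (scaleC c :: 'a::complex_hilbert \<Rightarrow> 'a)"
  by (rule bounded_linear_intro[where K="\<bar>Re c\<bar> + \<bar>Im c\<bar>"])
    (simp_all add: scaleC_add_right scaleC_scaleR_commute norm_scaleC_le mult.commute[of "norm _"])

lemma ell2_norm_nonneg: "x \<in> ell2_set \<Longrightarrow> 0 \<le> ell2_norm x"
  by (simp add: ell2_norm_def ell2_set_def suminf_nonneg)

lemma ell2_norm_zero [simp]: "ell2_norm (\<lambda>n. 0) = 0"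
  by (simp add: ell2_norm_def)

lemma ell2_comparison:
  assumes x: "x \<in> ell2_set" and le: "\<And>n. norm (y n) \<le> K * norm (x n)" and K: "0 \<le> K"
  shows "y \<in> ell2_set" and "ell2_norm y \<le> K * ell2_norm x"
proof -
  have sx: "summable (\<lambda>n. (norm (x n))\<^sup>2)" using x by (simp add: ell2_set_def)
  have le2: "(norm (y n))\<^sup>2 \<le> K\<^sup>2 * (norm (x n))\<^sup>2" for n
    using power_mono[OF le[of n] norm_ge_zero] by (simp add: power_mult_distrib)
  have sy: "summable (\<lambda>n. (norm (y n))\<^sup>2)"
    by (rule summable_comparison_test'[OF summable_mult[OF sx, of "K\<^sup>2"], where N=0]) (simp add: le2)
  then show "y \<in> ell2_set" by (simp add: ell2_set_def)
  have "(\<Sum>n. (norm (y n))\<^sup>2) \<le> K\<^sup>2 * (\<Sum>n. (norm (x n))\<^sup>2)"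
    using suminf_le[OF le2 sy summable_mult[OF sx]] suminf_mult[OF sx] by simp
  then have "ell2_norm y \<le> sqrt (K\<^sup>2 * (\<Sum>n. (norm (x n))\<^sup>2))"
    unfolding ell2_norm_def by (rule real_sqrt_le_mono)
  then show "ell2_norm y \<le> K * ell2_norm x"
    using K by (simp add: ell2_norm_def real_sqrt_mult)
qed

lemma ell2_finite_support: "finite A \<Longrightarrow> (\<And>n. n \<notin> A \<Longrightarrow> x n = 0) \<Longrightarrow> x \<in> ell2_set"
  unfolding ell2_set_def by (simp add: summable_finite)

lemma ell2_tail:
  assumes x: "x \<in> ell2_set"
  shows "(\<lambda>k. if k < m then 0 else x k) \<in> ell2_set"
    and "ell2_norm (\<lambda>k. if k < m then 0 else x k) = sqrt (\<Sum>i. (norm (x (i + m)))\<^sup>2)"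
proof -
  define t where "t = (\<lambda>k. (norm (if k < m then 0 else x k))\<^sup>2)"
  have "summable (\<lambda>i. (norm (x (i + m)))\<^sup>2)"
    using x summable_iff_shift[of "\<lambda>n. (norm (x n))\<^sup>2" m] by (simp add: ell2_set_def)
  then have st: "summable t"
    using summable_iff_shift[of t m] by (simp add: t_def)
  then show "(\<lambda>k. if k < m then 0 else x k) \<in> ell2_set"
    by (simp add: ell2_set_def t_def)
  have "(\<Sum>i<m. t i) = 0" by (simp add: t_def)
  then show "ell2_norm (\<lambda>k. if k < m then 0 else x k) = sqrt (\<Sum>i. (norm (x (i + m)))\<^sup>2)"
    using suminf_split_initial_segment[OF st, of m] by (simp add: ell2_norm_def t_def)
qed

lemma ell2_tail_tendsto_zero:
  assumes "x \<in> ell2_set"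
  shows "(\<lambda>m. sqrt (\<Sum>i. (norm (x (i + m)))\<^sup>2)) \<longlonglongrightarrow> 0"
proof -
  have s: "summable (\<lambda>n. (norm (x n))\<^sup>2)" using assms by (simp add: ell2_set_def)
  have "(\<lambda>m. (\<Sum>n. (norm (x n))\<^sup>2) - (\<Sum>i<m. (norm (x i))\<^sup>2))
      \<longlonglongrightarrow> (\<Sum>n. (norm (x n))\<^sup>2) - (\<Sum>n. (norm (x n))\<^sup>2)"
    by (intro tendsto_diff tendsto_const summable_LIMSEQ s)
  then have "(\<lambda>m. \<Sum>i. (norm (x (i + m)))\<^sup>2) \<longlonglongrightarrow> 0"
    by (simp add: suminf_minus_initial_segment[OF s])
  then show ?thesis using tendsto_real_sqrt by fastforce
qed

lemma sum_norm2_le_tail: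
  assumes "x \<in> ell2_set" and "m \<le> n"
  shows "(\<Sum>i\<in>{m..<n}. (norm (x i))\<^sup>2) \<le> (\<Sum>i. (norm (x (i + m)))\<^sup>2)"
proof -
  have s: "summable (\<lambda>n. (norm (x n))\<^sup>2)" using assms(1) by (simp add: ell2_set_def)
  have "(\<Sum>i\<in>{m..<n}. (norm (x i))\<^sup>2) = (\<Sum>i<n. (norm (x i))\<^sup>2) - (\<Sum>i<m. (norm (x i))\<^sup>2)"
    using sum_diff_nat_ivl[of 0 m n "\<lambda>i. (norm (x i))\<^sup>2"] assms(2) by (simp add: atLeast0LessThan)
  also have "\<dots> \<le> (\<Sum>i. (norm (x i))\<^sup>2) - (\<Sum>i<m. (norm (x i))\<^sup>2)"
    using sum_le_suminf[OF s, of "{..<n}"] by simp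
  finally show ?thesis by (simp add: suminf_minus_initial_segment[OF s])
qed

lemma hspace_simps [simp]:
  "sp_carrier hspace = UNIV" "sp_add hspace = (+)" "sp_scale hspace = scaleC" "sp_norm hspace = norm"
  by (simp_all add: hspace_def)

lemma ell2_simps [simp]:
  "sp_carrier ell2 = ell2_set" "sp_add ell2 = (\<lambda>x y n. x n + y n)"
  "sp_scale ell2 = (\<lambda>c x n. scaleC c (x n))" "sp_norm ell2 = ell2_norm"
  by (simp_all add: ell2_def)

lemma bounded_linear_if_bop_hspace:
  assumes "bop hspace hspace (A :: 'a::complex_hilbert \<Rightarrow> 'b::complex_hilbert)"
  shows "bounded_linear A"
proof -
  from assms obtain C where C: "\<And>v. norm (A v) \<le> C * norm v"
    by (auto simp: bop_def)
  show ?thesis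
  proof (rule bounded_linear_intro[where K=C])
    show "A (x + y) = A x + A y" for x y
      using assms by (simp add: bop_def)
    show "A (r *\<^sub>R x) = r *\<^sub>R A x" for r x
      using assms by (simp add: bop_def flip: scaleC_of_real)
    show "norm (A x) \<le> norm x * C" for x
      using C[of x] by (simp add: mult.commute)
  qed
qed

lemma bop_bound:
  assumes "bop V W A" and "\<And>v. v \<in> sp_carrier V \<Longrightarrow> 0 \<le> sp_norm V v"
  obtains C where "0 \<le> C" and "\<And>v. v \<in> sp_carrier V \<Longrightarrow> sp_norm W (A v) \<le> C * sp_norm V v"
proof -
  from assms(1) obtain C where C: "\<And>v. v \<in> sp_carrier V \<Longrightarrow> sp_norm W (A v) \<le> C * sp_norm V v"
    unfolding bop_def by blast
  have "sp_norm W (A v) \<le> \<bar>C\<bar> * sp_norm V v" if "v \<in> sp_carrier V" for v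
    using C[OF that] mult_right_mono[OF abs_ge_self[of C] assms(2)[OF that]] by linarith
  then show thesis by (intro that[of "\<bar>C\<bar>"]) auto
qed

lemma bop_comp:
  assumes "bop U V A" and "bop V W B" and "\<And>v. v \<in> sp_carrier V \<Longrightarrow> 0 \<le> sp_norm V v"
  shows "bop U W (B \<circ> A)"
proof -
  obtain CA where CA: "\<And>u. u \<in> sp_carrier U \<Longrightarrow> sp_norm V (A u) \<le> CA * sp_norm U u"
    using assms(1) unfolding bop_def by blast
  obtain CB where "0 \<le> CB" and CB: "\<And>v. v \<in> sp_carrier V \<Longrightarrow> sp_norm W (B v) \<le> CB * sp_norm V v"
    using bop_bound[OF assms(2,3)] by blast
  have "sp_norm W (B (A u)) \<le> (CB * CA) * sp_norm U u" if "u \<in> sp_carrier U" for u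
  proof -
    have Au: "A u \<in> sp_carrier V" using assms(1) that by (simp add: bop_def)
    have "sp_norm W (B (A u)) \<le> CB * sp_norm V (A u)" by (rule CB[OF Au])
    also have "\<dots> \<le> CB * (CA * sp_norm U u)" by (rule mult_left_mono[OF CA[OF that] \<open>0 \<le> CB\<close>])
    finally show ?thesis by (simp add: mult.assoc)
  qed
  then show ?thesis using assms(1,2) unfolding bop_def by auto
qed

lemma bop_uminus:
  assumes "bop V hspace (A :: 'a \<Rightarrow> 'b::complex_hilbert)"
  shows "bop V hspace (\<lambda>v. - A v)"
  using assms by (auto simp: bop_def scaleC_minus_right)

lemma sp_norm_dsum_space: "sp_norm dsum_space (a, x) = sqrt ((norm a)\<^sup>2 + (ell2_norm x)\<^sup>2)"
  by (simp add: dsum_space_def)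

lemma bop_dsum_block:
  fixes P :: "'k::complex_hilbert \<Rightarrow> 'k" and Q :: "(nat \<Rightarrow> 'h::complex_hilbert) \<Rightarrow> 'k"
    and R :: "(nat \<Rightarrow> 'h) \<Rightarrow> nat \<Rightarrow> 'h"
  assumes P: "bop hspace hspace P" and Q: "bop ell2 hspace Q" and R: "bop ell2 ell2 R"
  shows "bop dsum_space dsum_space (\<lambda>(a, x). (P a + Q x, R x))"
proof -
  obtain CP where "0 \<le> CP" and CP: "\<And>a. norm (P a) \<le> CP * norm a"
    using bop_bound[OF P] by auto
  obtain CQ where "0 \<le> CQ" and CQ: "\<And>x. x \<in> ell2_set \<Longrightarrow> norm (Q x) \<le> CQ * ell2_norm x"
    using bop_bound[OF Q] by (auto simp: ell2_norm_nonneg)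
  obtain CR where "0 \<le> CR" and CR: "\<And>x. x \<in> ell2_set \<Longrightarrow> ell2_norm (R x) \<le> CR * ell2_norm x"
    using bop_bound[OF R] by (auto simp: ell2_norm_nonneg)
  have bound: "sp_norm dsum_space (P a + Q x, R x) \<le> (CP + CQ + CR) * sp_norm dsum_space (a, x)"
    if x: "x \<in> ell2_set" for a x
  proof -
    define n where "n = sp_norm dsum_space (a, x)"
    have a_le: "norm a \<le> n" and x_le: "ell2_norm x \<le> n"
      by (simp_all add: n_def sp_norm_dsum_space)
    have "R x \<in> ell2_set" using R x by (simp add: bop_def)
    then have "sp_norm dsum_space (P a + Q x, R x) \<le> norm (P a + Q x) + ell2_norm (R x)"
      by (simp add: sp_norm_dsum_space sqrt_sum_squares_le_sum ell2_norm_nonneg)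
    also have "\<dots> \<le> CP * norm a + CQ * ell2_norm x + CR * ell2_norm x"
      using norm_triangle_ineq[of "P a" "Q x"] CP[of a] CQ[OF x] CR[OF x] by linarith
    also have "\<dots> \<le> CP * n + CQ * n + CR * n"
      using a_le x_le \<open>0 \<le> CP\<close> \<open>0 \<le> CQ\<close> \<open>0 \<le> CR\<close> by (intro add_mono mult_left_mono)
    finally show ?thesis by (simp add: n_def algebra_simps)
  qed
  show ?thesis
    using P Q R bound unfolding bop_def
    by (auto simp: dsum_space_def scaleC_add_right intro!: exI[of _ "CP + CQ + CR"])
qed

text \<open>\<open>L\<close> is \<open>(L\<^sub>T \<oplus> L\<^sub>S) [[I, -Y], [0, I]]\<close>, where \<open>L\<^sub>T\<close>, \<open>L\<^sub>S\<close> are the similarities for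
  \<open>T\<close> and \<open>S\<^sub>\<omega>\<close>; the Sylvester equation makes \<open>[[I, -Y], [0, I]]\<close> conjugate \<open>R(X)\<close>
  to \<open>T \<oplus> S\<^sub>\<omega>\<close>.\<close>

lemma similar_to_contraction_Rop:
  fixes T :: "'k::complex_hilbert \<Rightarrow> 'k" and X Y :: "(nat \<Rightarrow> 'h::complex_hilbert) \<Rightarrow> 'k"
  assumes T: "bop hspace hspace T" "similar_to_contraction hspace T"
    and S: "bop ell2 ell2 (wshift \<omega> :: (nat \<Rightarrow> 'h) \<Rightarrow> _)" "similar_to_contraction ell2 (wshift \<omega> :: (nat \<Rightarrow> 'h) \<Rightarrow> _)"
    and Y: "bop ell2 hspace Y"
    and sylvester: "\<And>x. x \<in> ell2_set \<Longrightarrow> X x = Y (wshift \<omega> x) - T (Y x)"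
  shows "similar_to_contraction dsum_space (Rop T X \<omega>)"
proof -
  obtain Lk Lki :: "'k \<Rightarrow> 'k" where Lk: "bop hspace hspace Lk" and Lki: "bop hspace hspace Lki"
    and Lk_inv: "\<And>a. Lki (Lk a) = a" "\<And>a. Lk (Lki a) = a"
    and Lk_contr: "\<And>a. norm (Lk (T (Lki a))) \<le> norm a"
    using T(2) by (auto simp: similar_to_contraction_def)
  obtain Ls Lsi :: "(nat \<Rightarrow> 'h) \<Rightarrow> nat \<Rightarrow> 'h" where Ls: "bop ell2 ell2 Ls" and Lsi: "bop ell2 ell2 Lsi"
    and Ls_inv: "\<And>x. x \<in> ell2_set \<Longrightarrow> Lsi (Ls x) = x" "\<And>x. x \<in> ell2_set \<Longrightarrow> Ls (Lsi x) = x"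
    and Ls_contr: "\<And>x. x \<in> ell2_set \<Longrightarrow> ell2_norm (Ls (wshift \<omega> (Lsi x))) \<le> ell2_norm x"
    using S(2) by (auto simp: similar_to_contraction_def)
  have Lsi_ell2: "Lsi x \<in> ell2_set" if "x \<in> ell2_set" for x
    using Lsi that by (simp add: bop_def)
  have contr_ell2: "Ls (wshift \<omega> (Lsi x)) \<in> ell2_set" if "x \<in> ell2_set" for x
    using Ls S(1) Lsi_ell2[OF that] by (simp add: bop_def)
  define L where "L = (\<lambda>(a, x). (Lk (a - Y x), Ls x))"
  define Li where "Li = (\<lambda>(a, x). (Lki a + Y (Lsi x), Lsi x))"
  have L_block: "L = (\<lambda>(a, x). (Lk a + - (Lk \<circ> Y) x, Ls x))"
    using linear_diff[OF bounded_linear.linear, OF bounded_linear_if_bop_hspace[OF Lk]]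
    by (auto simp: L_def fun_eq_iff)
  have "bop dsum_space dsum_space (\<lambda>(a, x). (Lk a + - (Lk \<circ> Y) x, Ls x))"
    by (intro bop_dsum_block bop_uminus bop_comp[OF Y] Lk Ls) simp
  then have L_bop: "bop dsum_space dsum_space L" unfolding L_block .
  have "bop ell2 hspace (Y \<circ> Lsi)"
    by (rule bop_comp[OF Lsi Y]) (simp add: ell2_norm_nonneg)
  then have Li_bop: "bop dsum_space dsum_space Li"
    unfolding Li_def using bop_dsum_block[OF Lki _ Lsi] by (simp add: comp_def)
  show ?thesis
    unfolding similar_to_contraction_def
  proof (intro exI conjI ballI)
    fix v :: "'k \<times> (nat \<Rightarrow> 'h)" assume "v \<in> sp_carrier dsum_space"
    then obtain a x where v: "v = (a, x)" and x: "x \<in> ell2_set" by (auto simp: dsum_space_def)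
    show "Li (L v) = v" and "L (Li v) = v"
      using Lk_inv Ls_inv[OF x] by (simp_all add: v L_def Li_def)
    have "Rop T X \<omega> (Li v) = (T (Lki a) + Y (wshift \<omega> (Lsi x)), wshift \<omega> (Lsi x))"
      using T(1) sylvester[OF Lsi_ell2[OF x]] by (simp add: v Li_def Rop_def bop_def)
    then have "L (Rop T X \<omega> (Li v)) = (Lk (T (Lki a)), Ls (wshift \<omega> (Lsi x)))"
      by (simp add: L_def)
    then show "sp_norm dsum_space (L (Rop T X \<omega> (Li v))) \<le> sp_norm dsum_space v"
      using Lk_contr[of a] Ls_contr[OF x] ell2_norm_nonneg[OF contr_ell2[OF x]]
      by (simp add: v sp_norm_dsum_space ell2_norm_nonneg real_sqrt_le_mono add_mono power_mono)
  qed (fact L_bop Li_bop)+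
qed

section \<open>Weighted shifts and diagonal operators\<close>

lemma wshift_ell2:
  assumes x: "x \<in> ell2_set" and bdd: "\<And>n. \<bar>\<omega> n\<bar> \<le> K"
  shows "wshift \<omega> x \<in> ell2_set" and "ell2_norm (wshift \<omega> x) \<le> K * ell2_norm x"
proof -
  define z where "z n = \<omega> n *\<^sub>R x n" for n
  have K: "0 \<le> K" using bdd[of 0] by linarith
  have "norm (z n) \<le> K * norm (x n)" for n
    using mult_right_mono[OF bdd[of n] norm_ge_zero[of "x n"]] by (simp add: z_def)
  note z = ell2_comparison[OF x this K]
  then have "(\<lambda>n. (norm (z n))\<^sup>2) sums (\<Sum>n. (norm (z n))\<^sup>2)"
    by (simp add: ell2_set_def summable_sums)
  then have "(\<lambda>n. (norm (wshift \<omega> x n))\<^sup>2) sums (\<Sum>n. (norm (z n))\<^sup>2)"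
    using sums_Suc_iff[of "\<lambda>n. (norm (wshift \<omega> x n))\<^sup>2"] by (simp add: wshift_def z_def)
  then have "wshift \<omega> x \<in> ell2_set \<and> ell2_norm (wshift \<omega> x) = ell2_norm z"
    by (simp add: ell2_set_def ell2_norm_def sums_iff)
  with z show "wshift \<omega> x \<in> ell2_set" and "ell2_norm (wshift \<omega> x) \<le> K * ell2_norm x"
    by simp_all
qed

lemma bop_wshift:
  assumes "\<And>n. \<bar>\<omega> n\<bar> \<le> K"
  shows "bop ell2 ell2 (wshift \<omega> :: (nat \<Rightarrow> 'a::complex_hilbert) \<Rightarrow> _)"
proof -
  have "wshift \<omega> x \<in> ell2_set \<and> ell2_norm (wshift \<omega> x) \<le> K * ell2_norm x"
    if "x \<in> ell2_set" for x :: "nat \<Rightarrow> 'a"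
    using wshift_ell2[OF that assms] by simp
  then show ?thesis
    unfolding bop_def
    by (auto simp: wshift_def fun_eq_iff scaleR_add_right scaleC_scaleR_commute intro!: exI[of _ K])
qed

definition diag_op :: "(nat \<Rightarrow> real) \<Rightarrow> (nat \<Rightarrow> 'a::complex_hilbert) \<Rightarrow> nat \<Rightarrow> 'a" where
  "diag_op c x = (\<lambda>n. c n *\<^sub>R x n)"

lemma bop_diag_op:
  assumes "\<And>n. \<bar>c n\<bar> \<le> K"
  shows "bop ell2 ell2 (diag_op c :: (nat \<Rightarrow> 'a::complex_hilbert) \<Rightarrow> _)"
proof -
  have K: "0 \<le> K" using assms[of 0] by linarith
  have "diag_op c x \<in> ell2_set \<and> ell2_norm (diag_op c x) \<le> K * ell2_norm x"
    if "x \<in> ell2_set" for x :: "nat \<Rightarrow> 'a"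
  proof -
    have "norm (diag_op c x n) \<le> K * norm (x n)" for n
      using mult_right_mono[OF assms[of n] norm_ge_zero[of "x n"]] by (simp add: diag_op_def)
    then show ?thesis using ell2_comparison[OF that _ K] by blast
  qed
  then show ?thesis
    unfolding bop_def
    by (auto simp: diag_op_def scaleR_add_right scaleC_scaleR_commute intro!: exI[of _ K])
qed

lemma diag_op_wshift_diag_op:
  "diag_op c (wshift \<omega> (diag_op d x)) = wshift (\<lambda>n. c (Suc n) * \<omega> n * d n) x"
  by (auto simp: diag_op_def wshift_def fun_eq_iff)

lemma wbeta_0 [simp]: "wbeta \<omega> 0 = 1"
  by (simp add: wbeta_def)

lemma wbeta_Suc: "wbeta \<omega> (Suc n) = wbeta \<omega> n * \<omega> n"
  by (simp add: wbeta_def)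

lemma wbeta_pos: "(\<And>k. 0 < \<omega> k) \<Longrightarrow> 0 < wbeta \<omega> n"
  unfolding wbeta_def by (rule prod_pos) simp

text \<open>Conjugating by the diagonal weights \<open>c n = b n / \<beta>(n)\<close>, with \<open>b n = (SUP k. \<beta>(n + k))\<close>
  decreasing, turns the weights of the shift into the ratios \<open>b (n + 1) / b n \<le> 1\<close>.\<close>

lemma similar_to_contraction_wshift:
  assumes pos: "\<And>k. 0 < \<omega> k" and bdd: "\<And>n k. wbeta \<omega> (n + k) / wbeta \<omega> n \<le> M"
  shows "similar_to_contraction ell2 (wshift \<omega> :: (nat \<Rightarrow> 'h::complex_hilbert) \<Rightarrow> _)"
proof -
  have \<beta>_pos: "0 < wbeta \<omega> n" for n
    using wbeta_pos[of \<omega>] pos by blast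
  have le_M: "wbeta \<omega> (n + k) \<le> M * wbeta \<omega> n" for n k
    using bdd[of n k] \<beta>_pos[of n] by (simp add: pos_divide_le_eq)
  define b where "b n = (SUP k. wbeta \<omega> (n + k))" for n
  have bdd_above: "bdd_above (range (\<lambda>k. wbeta \<omega> (n + k)))" for n
    using le_M by (intro bdd_aboveI2)
  have b_ge: "wbeta \<omega> (n + k) \<le> b n" for n k
    unfolding b_def by (rule cSUP_upper[OF UNIV_I bdd_above])
  have b_le: "b n \<le> M * wbeta \<omega> n" for n
    unfolding b_def by (rule cSUP_least) (simp_all add: le_M)
  have b_Suc: "b (Suc n) \<le> b n" for n
  proof -
    have "wbeta \<omega> (Suc n + k) \<le> b n" for k
      using b_ge[of n "Suc k"] by simp
    then show ?thesis by (simp add: b_def[of "Suc n"] cSUP_least)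
  qed
  have b_pos: "0 < b n" for n
    using b_ge[of n 0] \<beta>_pos[of n] by simp
  define c where "c n = b n / wbeta \<omega> n" for n
  have c_ge: "1 \<le> c n" and c_le: "c n \<le> M" for n
    using b_ge[of n 0] b_le[of n] \<beta>_pos[of n] by (simp_all add: c_def pos_divide_le_eq)
  have c_nz [simp]: "c n \<noteq> 0" and c_abs: "\<bar>c n\<bar> \<le> M" "\<bar>1 / c n\<bar> \<le> 1" for n
    using c_ge[of n] c_le[of n] by auto
  have shifted_weight: "c (Suc n) * \<omega> n * (1 / c n) = b (Suc n) / b n" for n
    using \<beta>_pos[of n] pos[of n] b_pos[of n] by (simp add: c_def wbeta_Suc field_simps)
  have shifted_weight_le: "\<bar>c (Suc n) * \<omega> n * (1 / c n)\<bar> \<le> 1" for n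
    unfolding shifted_weight using b_Suc[of n] b_pos[of n] b_pos[of "Suc n"] by simp
  show ?thesis
    unfolding similar_to_contraction_def
  proof (intro exI conjI ballI)
    show "bop ell2 ell2 (diag_op c :: (nat \<Rightarrow> 'h) \<Rightarrow> _)"
      using c_abs(1) by (rule bop_diag_op)
    show "bop ell2 ell2 (diag_op (\<lambda>n. 1 / c n) :: (nat \<Rightarrow> 'h) \<Rightarrow> _)"
      using c_abs(2) by (rule bop_diag_op)
  next
    fix x :: "nat \<Rightarrow> 'h" assume x: "x \<in> sp_carrier ell2"
    show "diag_op (\<lambda>n. 1 / c n) (diag_op c x) = x" and "diag_op c (diag_op (\<lambda>n. 1 / c n) x) = x"
      by (simp_all add: diag_op_def fun_eq_iff)
    show "sp_norm ell2 (diag_op c (wshift \<omega> (diag_op (\<lambda>n. 1 / c n) x))) \<le> sp_norm ell2 x"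
      using wshift_ell2(2)[of x "\<lambda>n. c (Suc n) * \<omega> n * (1 / c n)" 1] shifted_weight_le x
      by (simp add: diag_op_wshift_diag_op)
  qed
qed

section \<open>The orbit of the first coordinate\<close>

definition unit_seq :: "nat \<Rightarrow> 'a::complex_hilbert \<Rightarrow> nat \<Rightarrow> 'a" where
  "unit_seq n h = (\<lambda>m. if m = n then h else 0)"

lemma unit_seq_ell2: "unit_seq n h \<in> ell2_set"
  by (rule ell2_finite_support[of "{n}"]) (simp_all add: unit_seq_def)

lemma unit_seq_add: "unit_seq n (a + b) = (\<lambda>m. unit_seq n a m + unit_seq n b m)"
  by (auto simp: unit_seq_def)

lemma unit_seq_scaleC: "unit_seq n (scaleC c a) = (\<lambda>m. scaleC c (unit_seq n a m))"
  by (auto simp: unit_seq_def)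

lemma unit_seq_scaleR: "unit_seq n (r *\<^sub>R a) = (\<lambda>m. r *\<^sub>R unit_seq n a m)"
  by (auto simp: unit_seq_def)

lemma unit_seq_zero [simp]: "unit_seq n 0 = (\<lambda>m. 0)"
  by (simp add: unit_seq_def)

primrec corner_pow :: "('k::complex_hilbert \<Rightarrow> 'k) \<Rightarrow> ((nat \<Rightarrow> 'h::complex_hilbert) \<Rightarrow> 'k)
    \<Rightarrow> (nat \<Rightarrow> real) \<Rightarrow> nat \<Rightarrow> 'h \<Rightarrow> 'k" where
  "corner_pow T X \<omega> 0 h = 0"
| "corner_pow T X \<omega> (Suc n) h = T (corner_pow T X \<omega> n h) + X (unit_seq n (wbeta \<omega> n *\<^sub>R h))"

lemma Rop_pow_emb0:
  "(Rop T X \<omega> ^^ n) (emb0 h) = (corner_pow T X \<omega> n h, unit_seq n (wbeta \<omega> n *\<^sub>R h))"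
  by (induction n) (auto simp: emb0_def unit_seq_def Rop_def wshift_def wbeta_Suc fun_eq_iff)

lemma corner_pow_diagonal: "T 0 = 0 \<Longrightarrow> corner_pow T (\<lambda>_. 0) \<omega> n h = 0"
  by (induction n) simp_all

lemma beta_quad_near_mod_H_Rop_iff:
  assumes "T 0 = 0"
  shows "beta_quad_near_mod_H (wbeta \<omega>) (Rop T X \<omega>) (Rop T (\<lambda>_. 0) \<omega>) \<longleftrightarrow>
    (\<exists>s. \<forall>N xs. norm (\<Sum>n\<le>N. (1 / wbeta \<omega> n) *\<^sub>R corner_pow T X \<omega> n (xs n))
                  \<le> s * sqrt (\<Sum>n\<le>N. (norm (xs n))\<^sup>2))"
  unfolding beta_quad_near_mod_H_def Rop_pow_emb0 corner_pow_diagonal[of T, OF assms]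
  by (simp add: dsum_space_def dsum_sum_def scaleC_of_real scaleC_minus_one del: of_real_divide)

section \<open>The intertwining operator\<close>

definition intertwiner :: "('k::complex_hilbert \<Rightarrow> 'k) \<Rightarrow> ((nat \<Rightarrow> 'h::complex_hilbert) \<Rightarrow> 'k)
    \<Rightarrow> (nat \<Rightarrow> real) \<Rightarrow> (nat \<Rightarrow> 'h) \<Rightarrow> 'k" where
  "intertwiner T X \<omega> x = (\<Sum>n. (1 / wbeta \<omega> n) *\<^sub>R corner_pow T X \<omega> n (x n))"

locale quadratically_near =
  fixes T :: "'k::complex_hilbert \<Rightarrow> 'k" and X :: "(nat \<Rightarrow> 'h::complex_hilbert) \<Rightarrow> 'k"
    and \<omega> :: "nat \<Rightarrow> real" and s :: real
  assumes T_bop: "bop hspace hspace T"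
    and X_bop: "bop ell2 hspace X"
    and near: "\<And>N xs. norm (\<Sum>n\<le>N. (1 / wbeta \<omega> n) *\<^sub>R corner_pow T X \<omega> n (xs n))
                       \<le> s * sqrt (\<Sum>n\<le>N. (norm (xs n))\<^sup>2)"
    and near_const_nonneg: "0 \<le> s"
begin

abbreviation Y :: "(nat \<Rightarrow> 'h) \<Rightarrow> 'k" where
  "Y \<equiv> intertwiner T X \<omega>"

abbreviation Y_term :: "(nat \<Rightarrow> 'h) \<Rightarrow> nat \<Rightarrow> 'k" where
  "Y_term x n \<equiv> (1 / wbeta \<omega> n) *\<^sub>R corner_pow T X \<omega> n (x n)"

lemma T_bounded_linear: "bounded_linear T"
  by (rule bounded_linear_if_bop_hspace[OF T_bop])

lemma T_add: "T (u + v) = T u + T v" and T_scaleC: "T (scaleC c v) = scaleC c (T v)"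
  using T_bop by (simp_all add: bop_def)

lemma T_zero: "T 0 = 0"
  using T_add[of 0 0] by simp

lemma X_add: "x \<in> ell2_set \<Longrightarrow> y \<in> ell2_set \<Longrightarrow> X (\<lambda>n. x n + y n) = X x + X y"
  and X_scaleC: "x \<in> ell2_set \<Longrightarrow> X (\<lambda>n. scaleC c (x n)) = scaleC c (X x)"
  using X_bop by (simp_all add: bop_def)

lemma X_scaleR: "x \<in> ell2_set \<Longrightarrow> X (\<lambda>n. r *\<^sub>R x n) = r *\<^sub>R X x"
  using X_scaleC[of x "complex_of_real r"] by (simp add: scaleC_of_real)

lemma X_zero: "X (\<lambda>n. 0) = 0"
  using X_scaleR[of "\<lambda>n. 0" 0] ell2_finite_support[of "{}" "\<lambda>n. 0"] by simp

lemma corner_pow_zero [simp]: "corner_pow T X \<omega> n 0 = 0"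
  by (induction n) (simp_all add: X_zero T_zero)

lemma corner_pow_add: "corner_pow T X \<omega> n (a + b) = corner_pow T X \<omega> n a + corner_pow T X \<omega> n b"
  by (induction n) (simp_all add: T_add X_add unit_seq_ell2 scaleR_add_right unit_seq_add add_ac)

lemma corner_pow_scaleC: "corner_pow T X \<omega> n (scaleC c a) = scaleC c (corner_pow T X \<omega> n a)"
  by (induction n)
    (simp_all add: T_scaleC X_scaleC unit_seq_ell2 unit_seq_scaleC scaleC_add_right
      flip: scaleC_scaleR_commute)

lemma corner_pow_scaleR: "corner_pow T X \<omega> n (r *\<^sub>R a) = r *\<^sub>R corner_pow T X \<omega> n a"
  using corner_pow_scaleC[of n "complex_of_real r" a] by (simp add: scaleC_of_real)

lemma corner_pow_Suc':
  "corner_pow T X \<omega> (Suc n) h = T (corner_pow T X \<omega> n h) + wbeta \<omega> n *\<^sub>R X (unit_seq n h)"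
  by (simp add: unit_seq_scaleR X_scaleR unit_seq_ell2)

lemma near_bound_subset:
  assumes "I \<subseteq> {..N}"
  shows "norm (\<Sum>n\<in>I. Y_term x n) \<le> s * sqrt (\<Sum>n\<in>I. (norm (x n))\<^sup>2)"
proof -
  define xs where "xs n = (if n \<in> I then x n else 0)" for n
  have "(\<Sum>n\<le>N. f n (xs n)) = (\<Sum>n\<in>I. f n (x n))" if "\<And>n. f n 0 = 0" for f :: "nat \<Rightarrow> 'h \<Rightarrow> 'b::comm_monoid_add"
    using assms that by (intro sum.mono_neutral_cong_right) (auto simp: xs_def)
  from this[of "\<lambda>n h. (1 / wbeta \<omega> n) *\<^sub>R corner_pow T X \<omega> n h"] this[of "\<lambda>n h. (norm h)\<^sup>2"]
  show ?thesis using near[where N=N and xs=xs] by simp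
qed

lemma summable_Y_term:
  assumes x: "x \<in> ell2_set"
  shows "summable (Y_term x)"
proof (rule summable_Cauchy')
  let ?g = "\<lambda>m. s * sqrt (\<Sum>i. (norm (x (i + m)))\<^sup>2)"
  show "?g \<longlonglongrightarrow> 0"
    by (rule tendsto_mult_right_zero[OF ell2_tail_tendsto_zero[OF x]])
  show "\<forall>\<^sub>F m in sequentially. \<forall>n\<ge>m. norm (sum (Y_term x) {m..<n}) \<le> ?g m"
  proof (intro always_eventually allI impI)
    fix m n :: nat assume "m \<le> n"
    have "norm (sum (Y_term x) {m..<n}) \<le> s * sqrt (\<Sum>i\<in>{m..<n}. (norm (x i))\<^sup>2)"
      by (rule near_bound_subset[where N=n]) auto
    also have "\<dots> \<le> ?g m"
      using sum_norm2_le_tail[OF x \<open>m \<le> n\<close>] near_const_nonneg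
      by (intro mult_left_mono real_sqrt_le_mono)
    finally show "norm (sum (Y_term x) {m..<n}) \<le> ?g m" .
  qed
qed

lemma norm_intertwiner_le:
  assumes x: "x \<in> ell2_set"
  shows "norm (Y x) \<le> s * ell2_norm x"
proof (rule LIMSEQ_le_const2)
  show "(\<lambda>N. norm (\<Sum>n<N. Y_term x n)) \<longlonglongrightarrow> norm (Y x)"
    unfolding intertwiner_def by (intro tendsto_norm summable_LIMSEQ summable_Y_term x)
  have "norm (\<Sum>n<N. Y_term x n) \<le> s * ell2_norm x" for N
  proof -
    have "norm (\<Sum>n<N. Y_term x n) \<le> s * sqrt (\<Sum>n<N. (norm (x n))\<^sup>2)"
      by (rule near_bound_subset[where N=N]) auto
    also have "\<dots> \<le> s * ell2_norm x"
      using x near_const_nonneg unfolding ell2_norm_def ell2_set_def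
      by (intro mult_left_mono real_sqrt_le_mono sum_le_suminf) auto
    finally show ?thesis .
  qed
  then show "\<exists>N. \<forall>n\<ge>N. norm (\<Sum>n<n. Y_term x n) \<le> s * ell2_norm x" by blast
qed

lemma bop_intertwiner: "bop ell2 hspace Y"
proof -
  have "Y (\<lambda>n. x n + y n) = Y x + Y y" if "x \<in> ell2_set" "y \<in> ell2_set" for x y
    using suminf_add[OF summable_Y_term[OF that(1)] summable_Y_term[OF that(2)]]
    by (simp add: intertwiner_def corner_pow_add scaleR_add_right)
  moreover have "Y (\<lambda>n. scaleC c (x n)) = scaleC c (Y x)" if "x \<in> ell2_set" for c x
    using bounded_linear.suminf[OF bounded_linear_scaleC summable_Y_term[OF that], of c]
    by (simp add: intertwiner_def corner_pow_scaleC scaleC_scaleR_commute)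
  ultimately show ?thesis
    using norm_intertwiner_le unfolding bop_def by (auto intro!: exI[of _ s])
qed

lemma X_sums:
  assumes x: "x \<in> ell2_set"
  shows "(\<lambda>m. X (unit_seq m (x m))) sums X x"
proof -
  obtain C where C: "\<And>y. y \<in> ell2_set \<Longrightarrow> norm (X y) \<le> C * ell2_norm y"
    using X_bop unfolding bop_def ell2_simps hspace_simps by blast
  define head where "head N = (\<lambda>k. if k < N then x k else 0)" for N
  define tail where "tail N = (\<lambda>k. if k < N then 0 else x k)" for N
  have head: "head N \<in> ell2_set" for N
    by (rule ell2_finite_support[of "{..<N}"]) (simp_all add: head_def)
  have tail: "tail N \<in> ell2_set" for N
    unfolding tail_def by (rule ell2_tail(1)[OF x])
  have partial: "(\<Sum>m<N. X (unit_seq m (x m))) = X (head N)" for N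
  proof (induction N)
    case 0
    show ?case by (simp add: head_def X_zero)
  next
    case (Suc N)
    have "head (Suc N) = (\<lambda>k. head N k + unit_seq N (x N) k)"
      by (auto simp: head_def unit_seq_def)
    then show ?case using Suc X_add[OF head unit_seq_ell2] by simp
  qed
  have split: "X x - X (tail N) = X (head N)" for N
  proof -
    have "(\<lambda>k. head N k + tail N k) = x" by (auto simp: head_def tail_def)
    then show ?thesis using X_add[OF head tail, of N N] by simp
  qed
  have "(\<lambda>N. X (tail N)) \<longlonglongrightarrow> 0"
  proof (rule Lim_null_comparison)
    show "\<forall>\<^sub>F N in sequentially. norm (X (tail N)) \<le> C * sqrt (\<Sum>i. (norm (x (i + N)))\<^sup>2)"
      using C[OF tail] ell2_tail(2)[OF x] by (intro always_eventually allI) (simp add: tail_def)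
    show "(\<lambda>N. C * sqrt (\<Sum>i. (norm (x (i + N)))\<^sup>2)) \<longlonglongrightarrow> 0"
      by (rule tendsto_mult_right_zero[OF ell2_tail_tendsto_zero[OF x]])
  qed
  then have "(\<lambda>N. X x - X (tail N)) \<longlonglongrightarrow> X x - 0"
    by (intro tendsto_diff tendsto_const)
  then show ?thesis unfolding sums_def partial split by simp
qed

text \<open>Telescoping: by the recursion for \<open>corner_pow\<close>, the \<open>m\<close>-th term of
  \<open>Y (S x) - T (Y x)\<close> is exactly \<open>X (unit_seq m (x m))\<close>.\<close>

lemma sylvester_equation:
  assumes pos: "\<And>k. 0 < \<omega> k" and bdd: "\<And>k. \<bar>\<omega> k\<bar> \<le> K" and x: "x \<in> ell2_set"
  shows "X x = Y (wshift \<omega> x) - T (Y x)"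
proof -
  interpret T: bounded_linear T by (rule T_bounded_linear)
  have \<beta>_pos: "0 < wbeta \<omega> n" for n
    using wbeta_pos[of \<omega>] pos by blast
  have Sx: "wshift \<omega> x \<in> ell2_set"
    using wshift_ell2(1)[OF x bdd] .
  have Sx_term: "Y_term (wshift \<omega> x) (Suc m) = (1 / wbeta \<omega> m) *\<^sub>R corner_pow T X \<omega> (Suc m) (x m)" for m
  proof -
    have "1 / wbeta \<omega> (Suc m) * \<omega> m = 1 / wbeta \<omega> m"
      using \<beta>_pos[of m] pos[of m] by (simp add: wbeta_Suc)
    then show ?thesis
      by (simp del: corner_pow.simps add: wshift_def corner_pow_scaleR)
  qed
  have "Y (wshift \<omega> x) = (\<Sum>m. Y_term (wshift \<omega> x) (Suc m))"
    using suminf_split_head[OF summable_Y_term[OF Sx]] by (simp add: intertwiner_def wshift_def)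
  moreover have "T (Y x) = (\<Sum>m. T (Y_term x m))"
    unfolding intertwiner_def by (rule T.suminf[OF summable_Y_term[OF x]])
  moreover have "Y_term (wshift \<omega> x) (Suc m) - T (Y_term x m) = X (unit_seq m (x m))" for m
  proof -
    have "Y_term (wshift \<omega> x) (Suc m) - T (Y_term x m)
        = (1 / wbeta \<omega> m) *\<^sub>R (corner_pow T X \<omega> (Suc m) (x m) - T (corner_pow T X \<omega> m (x m)))"
      unfolding Sx_term by (simp only: T.scaleR scaleR_diff_right)
    also have "\<dots> = X (unit_seq m (x m))"
      using \<beta>_pos[of m] by (simp del: corner_pow.simps add: corner_pow_Suc')
    finally show ?thesis .
  qed
  ultimately have "Y (wshift \<omega> x) - T (Y x) = (\<Sum>m. X (unit_seq m (x m)))"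
    using suminf_diff[OF summable_Suc_iff[THEN iffD2, OF summable_Y_term[OF Sx]]
        T.summable[OF summable_Y_term[OF x]]] by simp
  then show ?thesis using sums_unique[OF X_sums[OF x]] by simp
qed

end

lemma quadratically_near_if_beta_quad_near:
  fixes T :: "'k::complex_hilbert \<Rightarrow> 'k" and X :: "(nat \<Rightarrow> 'h::complex_hilbert) \<Rightarrow> 'k"
  assumes T_bop: "bop hspace hspace T" and X_bop: "bop ell2 hspace X"
    and near: "beta_quad_near_mod_H (wbeta \<omega>) (Rop T X \<omega>) (Rop T (\<lambda>_. 0) \<omega>)"
  obtains s where "quadratically_near T X \<omega> s"
proof -
  have "T 0 = 0"
    by (rule linear_0[OF bounded_linear.linear[OF bounded_linear_if_bop_hspace[OF T_bop]]])
  then obtain s where s: "\<And>N xs. norm (\<Sum>n\<le>N. (1 / wbeta \<omega> n) *\<^sub>R corner_pow T X \<omega> n (xs n))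
                                   \<le> s * sqrt (\<Sum>n\<le>N. (norm (xs n))\<^sup>2)"
    using near beta_quad_near_mod_H_Rop_iff[of T] by blast
  have "quadratically_near T X \<omega> \<bar>s\<bar>"
  proof
    show "norm (\<Sum>n\<le>N. (1 / wbeta \<omega> n) *\<^sub>R corner_pow T X \<omega> n (xs n))
        \<le> \<bar>s\<bar> * sqrt (\<Sum>n\<le>N. (norm (xs n))\<^sup>2)" for N and xs :: "nat \<Rightarrow> 'h"
      using s[where N=N and xs=xs] mult_right_mono[OF abs_ge_self[of s], of "sqrt (\<Sum>n\<le>N. (norm (xs n))\<^sup>2)"]
      by (simp add: sum_nonneg)
  qed (simp_all add: T_bop X_bop)
  then show thesis ..
qed

theorem theorem4p7:
  fixes \<omega> :: "nat \<Rightarrow> real"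
    and T :: "'k::complex_hilbert \<Rightarrow> 'k"
    and X :: "(nat \<Rightarrow> 'h::complex_hilbert) \<Rightarrow> 'k"
  assumes pos: "\<And>k. \<omega> k > 0"
    and sup_bdd: "\<exists>M. \<forall>n k. wbeta \<omega> (n + k) / wbeta \<omega> n \<le> M"
    and T_bop: "bop hspace hspace T"
    and T_sim: "similar_to_contraction hspace T"
    and X_bop: "bop ell2 hspace X"
    and near: "beta_quad_near_mod_H (wbeta \<omega>) (Rop T X \<omega>) (Rop T (\<lambda>_. 0) \<omega>)"
  shows "similar_to_contraction dsum_space (Rop T X \<omega>)"
proof -
  obtain M where M: "\<And>n k. wbeta \<omega> (n + k) / wbeta \<omega> n \<le> M"
    using sup_bdd by blast
  have \<omega>_le: "\<bar>\<omega> k\<bar> \<le> M" for k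
    using M[of k 1] wbeta_pos[of \<omega> k, OF pos] pos[of k] by (simp add: wbeta_Suc)
  obtain s where "quadratically_near T X \<omega> s"
    using quadratically_near_if_beta_quad_near[OF T_bop X_bop near] .
  then interpret quadratically_near T X \<omega> s .
  show ?thesis
  proof (rule similar_to_contraction_Rop[OF T_bop T_sim _ _ bop_intertwiner])
    show "bop ell2 ell2 (wshift \<omega> :: (nat \<Rightarrow> 'h) \<Rightarrow> _)"
      using \<omega>_le by (rule bop_wshift)
    show "similar_to_contraction ell2 (wshift \<omega> :: (nat \<Rightarrow> 'h) \<Rightarrow> _)"
      using pos M by (rule similar_to_contraction_wshift)
    show "X x = intertwiner T X \<omega> (wshift \<omega> x) - T (intertwiner T X \<omega> x)" if "x \<in> ell2_set" for x
      using pos \<omega>_le that by (rule sylvester_equation)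
  qed
qed

end
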